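(* Let $q$ be an odd prime power and $\varepsilon=(-1)^{(q-1)/2}$ (so $q\equiv\varepsilon\pmod 4$ and $\varepsilon=\left(\frac{-1}{q}\right)$). For every $k\ge 1$ we have $D_k(2)=2$, $D_k(-2)=(-1)^k\cdot 2$, and, viewing $D_k$ as a map ${\mathbb F}_q\to{\mathbb F}_q$: (i) $D_k(\mathcal A_2^{++})\subset \mathcal A_2^{++}\sqcup\{2,-2\varepsilon\}$ and $D_k(\mathcal A_2^{-+})\subset \mathcal A_2^{-+}\sqcup\{2,2\varepsilon\}$. (ii) If $k$ is odd then $D_k(\mathcal A_2^{\varepsilon,-})\subset \mathcal A_2^{\varepsilon,-}\sqcup\{-2\}$ and $D_k(\mathcal A_2^{-\varepsilon,-})\subset\mathcal A_2^{-\varepsilon,-}$. (iii) If $k$ is even then $D_k(\mathcal A_2^{--})\subset \mathcal A_2^{++}\sqcup\{2,-2\varepsilon\}$ and $D_k(\mathcal A_2^{+-})\subset\mathcal A_2^{-+}\sqcup\{2,2\varepsilon\}$. (iv) If $(q-1)/2$ divides $k$, then $D_k({\mathbb F}_q)\subset \mathcal A_2^{+-}\sqcup\mathcal A_2^{-+}\sqcup\{2,-2\}$; if in addition $k$ is even then $D_k({\mathbb F}_q)\subset\mathcal A_2^{-+}\sqcup\{2,-2\}$. (v) If $(q+1)/2$ divides $k$, then $D_k({\mathbb F}_q)\subset \mathcal A_2^{++}\sqcup\mathcal A_2^{--}\sqcup\{2,-2\}$; if in addition $k$ is even then $D_k({\mathbb F}_q)\subset\mathcal A_2^{++}\sqcup\{2,-2\}$.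 (vi) If $\mathcal A_2^{\varepsilon_1,\varepsilon_2}$ is nonempty, then $D_k$ permutes $\mathcal A_2^{\varepsilon_1,\varepsilon_2}$ if and only if $\gcd(k,d^{\varepsilon_1,\varepsilon_2})=1$, where $d^{++}=(q-1)/2$, $d^{+-}=q+1$, $d^{-+}=(q+1)/2$, $d^{--}=q-1$.
   Context: The Dickson polynomials of the first kind $D_k(x)\in\mathbb Z[x]$ are defined by $D_0=2$, $D_1=x$, $D_{k+2}=xD_{k+1}-D_k$; equivalently $D_k(u+1/u)=u^k+u^{-k}$ for an indeterminate $u$. They are regarded as functions on ${\mathbb F}_q$ by reducing coefficients. For $q$ odd and $a\in{\mathbb F}_q$, $\left(\frac{a}{q}\right)$ is $1$ if $a$ is a nonzero square, $-1$ if $a$ is a nonsquare, $0$ if $a=0$. For $\varepsilon_1,\varepsilon_2\in\{1,-1\}$ (written $+,-$) and $\lambda\in{\mathbb F}_q^\times$, $\mathcal A_\lambda^{\varepsilon_1,\varepsilon_2}=\{u\in{\mathbb F}_q: \left(\frac{u-\lambda}{q}\right)=\varepsilon_1,\ \left(\frac{u+\lambda}{q}\right)=\varepsilon_2\}$. *)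

theory Defs
  imports Main
begin

fun dickson :: "nat \<Rightarrow> 'a::comm_ring_1 \<Rightarrow> 'a" where
  "dickson 0 x = 2"
| "dickson (Suc 0) x = x"
| "dickson (Suc (Suc k)) x = x * dickson (Suc k) x - dickson k x"

definition qchar :: "'a::field \<Rightarrow> int" where
  "qchar a = (if a = 0 then 0 else if (\<exists>y. y ^ 2 = a) then 1 else -1)"

definition Aset :: "'a::field \<Rightarrow> int \<Rightarrow> int \<Rightarrow> 'a set" where
  "Aset lam e1 e2 = {u. qchar (u - lam) = e1 \<and> qchar (u + lam) = e2}"

definition dval :: "nat \<Rightarrow> int \<Rightarrow> int \<Rightarrow> nat" where
  "dval q e1 e2 =
     (if e1 = 1 \<and> e2 = 1 then (q - 1) div 2
      else if e1 = 1 \<and> e2 = -1 then q + 1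
      else if e1 = -1 \<and> e2 = 1 then (q + 1) div 2
      else q - 1)"

end

theory Submission
  imports Defs "HOL-Computational_Algebra.Polynomial" "HOL-Library.Cardinality"
begin

(* Write q for the order of the field.  Every x in F_q is u + u^-1 for some u in F_{q^2} lying in
   the split torus F_q^* (order q - 1) or in the norm-one torus (order q + 1), and
   D_k (u + u^-1) = u^k + u^-k.  Euler's criterion applied to x + 2 = (u + 1)^2/u and
   x - 2 = (u - 1)^2/u shows that the pair of characters ((x - 2)/q, (x + 2)/q) is (s, s) on the
   split torus and (-s, s) on the norm-one torus, where s = u^(n/2) is the quadratic character
   of u in its torus of order n.  So Aset 2 e1 e2 is the image, under u |-> u + u^-1, of the
   elements of character e2 other than +-1 in the torus of order n = q - e1 e2, and D_k acts
   there as u |-> u^k.  Parts (i)-(v) follow from s(u^k) = s(u)^k; part (vi) from the fact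
   that u |-> u^k permutes these elements iff k is prime to n/2 (for e2 = 1) or to n
   (for e2 = -1). *)

lemma dickson_add_inverse:
  fixes u v :: "'a::comm_ring_1"
  assumes "u * v = 1"
  shows "dickson k (u + v) = u ^ k + v ^ k"
proof (induction k "u + v" rule: dickson.induct)
  case (3 k)
  have "dickson (Suc (Suc k)) (u + v) = (u + v) * (u ^ Suc k + v ^ Suc k) - (u ^ k + v ^ k)"
    using 3 by simp
  also have "\<dots> = u ^ Suc (Suc k) + v ^ Suc (Suc k) + (u * v - 1) * (u ^ k + v ^ k)"
    by (simp add: algebra_simps)
  finally show ?case
    using assms by simp
qed simp_all

lemma dickson_two: "dickson k (2 :: 'a::comm_ring_1) = 2"
  using dickson_add_inverse[of 1 1 k] by simp

lemma dickson_minus_two: "dickson k (- 2 :: 'a::comm_ring_1) = (- 1) ^ k * 2"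
  using dickson_add_inverse[of "- 1" "- 1" k] by (simp add: mult_2_right)

section \<open>Roots of unity in finite fields\<close>

definition roots_unity :: "nat \<Rightarrow> 'a::field set" where
  "roots_unity n = {u. u ^ n = 1}"

lemma power_roots_bound:
  fixes c :: "'a::idom"
  assumes "n > 0"
  shows "finite {y. y ^ n = c}" and "card {y. y ^ n = c} \<le> n"
proof -
  define p where "p = monom 1 n + [:- c:]"
  have deg: "degree p = n"
    using assms unfolding p_def by (subst degree_add_eq_left) (simp_all add: degree_monom_eq)
  hence "p \<noteq> 0"
    using assms by auto
  moreover have roots: "{y. poly p y = 0} = {y. y ^ n = c}"
    by (auto simp: p_def poly_monom)
  ultimately show "finite {y. y ^ n = c}" and "card {y. y ^ n = c} \<le> n"
    using poly_roots_finite[of p] card_poly_roots_bound[of p] deg by simp_all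
qed

lemma card_le_mult_card_image:
  assumes "finite A" and "\<And>z. card {y \<in> A. f y = z} \<le> m"
  shows "card A \<le> m * card (f ` A)"
proof -
  have "card A = card (\<Union>z\<in>f ` A. {y \<in> A. f y = z})"
    by (rule arg_cong[where f = card]) auto
  also have "\<dots> \<le> (\<Sum>z\<in>f ` A. card {y \<in> A. f y = z})"
    using assms(1) by (intro card_UN_le) simp
  also have "\<dots> \<le> (\<Sum>z\<in>f ` A. m)"
    by (intro sum_mono assms(2))
  finally show ?thesis
    by (simp add: mult.commute)
qed

lemma power_card_minus_one:
  fixes x :: "'a::{field,finite}"
  assumes "x \<noteq> 0"
  shows "x ^ (CARD('a) - 1) = 1"
proof -
  let ?U = "UNIV - {0 :: 'a}"
  have "(\<Prod>y\<in>?U. x * y) = (\<Prod>y\<in>?U. y)"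
    by (rule prod.reindex_bij_witness[of _ "\<lambda>y. y / x" "\<lambda>y. x * y"]) (use assms in auto)
  moreover have "(\<Prod>y\<in>?U. x * y) = x ^ (CARD('a) - 1) * (\<Prod>y\<in>?U. y)"
    by (simp add: prod.distrib card_Diff_subset)
  moreover have "(\<Prod>y\<in>?U. y) \<noteq> 0"
    by simp
  ultimately show ?thesis
    by simp
qed

lemma card_field_ge_two: "CARD('a::{field,finite}) \<ge> 2"
proof -
  have "card {0 :: 'a, 1} \<le> CARD('a)"
    by (rule card_mono) auto
  thus ?thesis
    by simp
qed

lemma power_card_split: "(x :: 'b::monoid_mult) ^ CARD('a::{field,finite}) = x ^ (CARD('a) - 1) * x"
  using card_field_ge_two[where 'a = 'a] by (simp flip: power_Suc2)

lemma power_card_eq_self: "a ^ CARD('a) = (a :: 'a::{field,finite})"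
  using power_card_split[of a, where 'a = 'a] power_card_minus_one[of a] by (cases "a = 0") simp_all

lemma power_image_nonzero:
  fixes e d :: nat
  assumes ed: "e * d = CARD('a::{field,finite}) - 1"
  shows "(\<lambda>y. y ^ e) ` (UNIV - {0}) = (roots_unity d :: 'a set)"
    and "card (roots_unity d :: 'a set) = d"
proof -
  let ?S = "(\<lambda>y. y ^ e) ` (UNIV - {0 :: 'a})"
  have "e * d > 0"
    using ed card_field_ge_two[where 'a = 'a] by simp
  hence pos: "e > 0" "d > 0"
    by simp_all
  have "(y ^ e) ^ d = 1" if "y \<noteq> 0" for y :: 'a
    by (simp only: power_mult[symmetric] ed power_card_minus_one[OF that])
  hence sub: "?S \<subseteq> roots_unity d"
    by (auto simp: roots_unity_def)
  have fin: "finite (roots_unity d :: 'a set)" and le: "card (roots_unity d :: 'a set) \<le> d"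
    using power_roots_bound[OF pos(2)] by (simp_all add: roots_unity_def)
  have fibre: "card {y \<in> UNIV - {0}. y ^ e = z} \<le> e" for z :: 'a
  proof -
    have "card {y \<in> UNIV - {0}. y ^ e = z} \<le> card {y. y ^ e = z}"
      by (intro card_mono power_roots_bound(1)[OF pos(1)]) blast
    also have "\<dots> \<le> e"
      by (rule power_roots_bound(2)[OF pos(1)])
    finally show ?thesis .
  qed
  have "e * d = card (UNIV - {0 :: 'a})"
    by (simp add: card_Diff_subset ed)
  also have "\<dots> \<le> e * card ?S"
    by (intro card_le_mult_card_image fibre) simp
  finally have "d \<le> card ?S"
    using pos(1) by simp
  moreover have "card ?S \<le> card (roots_unity d :: 'a set)"
    by (rule card_mono[OF fin sub])
  ultimately have "card ?S = card (roots_unity d :: 'a set)" "card (roots_unity d :: 'a set) = d"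
    using le by linarith+
  thus "?S = roots_unity d" "card (roots_unity d :: 'a set) = d"
    using card_subset_eq[OF fin sub] by simp_all
qed

lemma card_roots_unity:
  "d dvd CARD('a::{field,finite}) - 1 \<Longrightarrow> card (roots_unity d :: 'a set) = d"
  by (elim dvdE) (metis mult.commute power_image_nonzero(2))

lemma of_nat_card_eq_zero: "of_nat CARD('a::{comm_ring_1,finite}) = (0 :: 'a)"
proof -
  have "(\<Sum>y\<in>UNIV. y + 1) = (\<Sum>y\<in>UNIV. y :: 'a)"
    by (rule sum.reindex_bij_witness[of _ "\<lambda>y. y - 1" "\<lambda>y. y + 1"]) auto
  thus ?thesis
    by (simp add: sum.distrib)
qed

lemma two_neq_zero_odd_card:
  assumes "odd CARD('a::{field,finite})"
  shows "(2 :: 'a) \<noteq> 0"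
proof
  assume two: "(2 :: 'a) = 0"
  obtain m where "CARD('a) = 2 * m + 1"
    using assms oddE by blast
  hence "(of_nat CARD('a) :: 'a) = 1"
    using two by simp
  thus False
    using of_nat_card_eq_zero[where 'a = 'a] by simp
qed

lemma minus_one_neq_one: "(2 :: 'a::ring_1) \<noteq> 0 \<Longrightarrow> (- 1 :: 'a) \<noteq> 1"
  by (metis one_add_one add.right_inverse)

lemma of_int_eq_iff_signs:
  assumes "(2 :: 'a::ring_1) \<noteq> 0" "i \<in> {- 1, 0, 1}" "j \<in> {- 1, 0, 1}"
  shows "(of_int i :: 'a) = of_int j \<longleftrightarrow> i = j"
  using assms minus_one_neq_one[OF assms(1)] by auto

lemma of_int_qchar_eq_power:
  fixes a :: "'a::{field,finite}"
  assumes odd: "odd CARD('a)"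
  shows "of_int (qchar a) = a ^ ((CARD('a) - 1) div 2)"
proof -
  let ?m = "(CARD('a) - 1) div 2"
  have m: "2 * ?m = CARD('a) - 1"
    using odd by simp
  have "?m > 0"
    using odd card_field_ge_two[where 'a = 'a] by (auto elim!: oddE)
  show ?thesis
  proof (cases "\<exists>y. y ^ 2 = a")
    case True
    show ?thesis
    proof (cases "a = 0")
      case False
      with True have "a \<in> (\<lambda>y. y ^ 2) ` (UNIV - {0})"
        by force
      hence "a ^ ?m = 1"
        unfolding power_image_nonzero(1)[OF m] by (simp add: roots_unity_def)
      thus ?thesis
        using False True by (simp add: qchar_def)
    qed (use \<open>?m > 0\<close> in \<open>simp add: qchar_def\<close>)
  next
    case False
    have "a \<notin> (\<lambda>y. y ^ 2) ` (UNIV - {0})"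
      using False by blast
    hence "a ^ ?m \<noteq> 1"
      unfolding power_image_nonzero(1)[OF m] by (simp add: roots_unity_def)
    moreover have "a \<noteq> 0"
      using False by (metis zero_power2)
    moreover have "(a ^ ?m) ^ 2 = 1"
      by (simp only: power_mult[symmetric] mult.commute[of ?m] m power_card_minus_one[OF \<open>a \<noteq> 0\<close>])
    ultimately have "a ^ ?m = - 1"
      by (simp add: power2_eq_1_iff)
    thus ?thesis
      using False \<open>a \<noteq> 0\<close> by (simp add: qchar_def)
  qed
qed

lemma qchar_range: "qchar a \<in> {- 1, 0, 1}"
  by (simp add: qchar_def)

lemma qchar_eq_zero_iff: "qchar a = 0 \<longleftrightarrow> a = 0"
  by (simp add: qchar_def)

section \<open>Power maps on roots of unity\<close>

lemma power_commute_exponents: "(a ^ m) ^ n = (a ^ n) ^ m" for a :: "'a::monoid_mult"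
  by (simp only: power_mult[symmetric] mult.commute)

lemma power_gcd_eq_one:
  fixes u :: "'a::comm_monoid_mult"
  assumes "u ^ a = 1" "u ^ b = 1"
  shows "u ^ gcd a b = 1"
proof (cases "a = 0")
  case False
  then obtain x y where "a * x = b * y + gcd a b"
    using bezout_nat by blast
  hence "(u ^ a) ^ x = (u ^ b) ^ y * u ^ gcd a b"
    by (simp flip: power_mult power_add)
  thus ?thesis
    using assms by simp
qed (use assms in simp)

lemma inj_on_power_roots_unity:
  assumes "coprime k d" "d > 0"
  shows "inj_on (\<lambda>u. u ^ k) (roots_unity d :: 'a::field set)"
proof (rule inj_onI)
  fix u v :: 'a
  assume u: "u \<in> roots_unity d" and v: "v \<in> roots_unity d" and uv: "u ^ k = v ^ k"
  have "v \<noteq> 0"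
    using v assms(2) by (auto simp: roots_unity_def power_0_left)
  have "(u / v) ^ k = 1" "(u / v) ^ d = 1"
    using uv u v \<open>v \<noteq> 0\<close> by (simp_all add: power_divide roots_unity_def)
  hence "u / v = 1"
    using power_gcd_eq_one[of "u / v" k d] assms(1) by simp
  thus "u = v"
    using \<open>v \<noteq> 0\<close> by simp
qed

lemma power_half_roots_unity:
  fixes u :: "'a::field"
  assumes "u \<in> roots_unity n" "even n"
  shows "u ^ (n div 2) = 1 \<or> u ^ (n div 2) = - 1"
proof -
  have "(u ^ (n div 2)) ^ 2 = 1"
    using assms by (simp add: roots_unity_def flip: power_mult)
  thus ?thesis
    by (simp add: power2_eq_1_iff)
qed

lemma nontrivial_root_of_not_coprime:
  assumes "m dvd CARD('a::{field,finite}) - 1" "\<not> coprime k m"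
  shows "\<exists>z :: 'a. z \<in> roots_unity m \<and> z \<noteq> 1 \<and> z ^ k = 1"
proof -
  obtain p where p: "prime p" "p dvd gcd k m"
    using assms(2) prime_factor_nat[of "gcd k m"] by (auto simp: coprime_iff_gcd_eq_1)
  hence "p dvd CARD('a) - 1"
    using assms(1) by (meson dvd_trans gcd_dvd2)
  hence "card (roots_unity p :: 'a set) > card {1 :: 'a}"
    using prime_gt_1_nat[OF p(1)] by (simp add: card_roots_unity)
  hence "\<not> roots_unity p \<subseteq> {1 :: 'a}"
    using card_mono[of "{1 :: 'a}" "roots_unity p"] by auto
  then obtain z :: 'a where z: "z \<in> roots_unity p" "z \<noteq> 1"
    by blast
  from p(2) obtain i j where "k = p * i" "m = p * j"
    by (meson dvdE dvd_gcdD1 dvd_gcdD2)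
  with z have "z \<in> roots_unity m" "z ^ k = 1"
    by (simp_all add: roots_unity_def power_mult)
  with z(2) show ?thesis
    by blast
qed

(* The elements of mu_n other than 1 and -1 that are squares (e = 1) or non-squares (e = -1)
   in the cyclic group mu_n. *)
definition signed_roots :: "nat \<Rightarrow> int \<Rightarrow> 'a::field set" where
  "signed_roots n e = {u \<in> roots_unity n. u \<notin> {1, - 1} \<and> u ^ (n div 2) = of_int e}"

lemma power_maps_signed_roots:
  fixes u :: "'a::field"
  assumes "u \<in> signed_roots n e" "e \<in> {1, - 1}"
  shows "u ^ k \<in> roots_unity n" "(u ^ k) ^ (n div 2) = of_int (e ^ k)"
  using assms by (auto simp: signed_roots_def roots_unity_def power_commute_exponents[of u k])

lemma bij_power_signed_roots:
  fixes n k :: nat and e :: int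
  assumes two: "(2 :: 'a::{field,finite}) \<noteq> 0" and n: "even n" "n > 0" and e: "e \<in> {1, - 1}"
    and cop: "coprime k (if e = 1 then n div 2 else n)"
  shows "bij_betw (\<lambda>u. u ^ k) (signed_roots n e) (signed_roots n e :: 'a set)"
proof -
  define d where "d = (if e = 1 then n div 2 else n)"
  have "d > 0"
    using n by (auto simp: d_def)
  have sub: "signed_roots n e \<subseteq> (roots_unity d :: 'a set)"
    using n by (auto simp: signed_roots_def roots_unity_def d_def)
  have "coprime k d"
    using cop by (simp only: d_def)
  hence inj: "inj_on (\<lambda>u. u ^ k) (roots_unity d :: 'a set)"
    using inj_on_power_roots_unity \<open>d > 0\<close> by blast
  have sign: "(of_int e :: 'a) ^ k = of_int e"
  proof (cases "e = 1")
    case False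
    hence "odd k"
      using cop n(1) e by (auto simp: d_def)
    thus ?thesis
      using False e by simp
  qed simp
  have "u ^ k \<in> signed_roots n e" if u: "u \<in> signed_roots n e" for u :: 'a
  proof -
    have one: "1 \<in> roots_unity d"
      by (simp add: roots_unity_def)
    have "u \<noteq> 1" "u \<noteq> - 1"
      using u by (simp_all add: signed_roots_def)
    have "u \<in> roots_unity d"
      using u sub by blast
    hence "u ^ 2 \<in> roots_unity d"
      by (simp add: roots_unity_def power_commute_exponents[of u 2])
    have "u ^ k \<noteq> 1"
      using inj_onD[OF inj _ \<open>u \<in> roots_unity d\<close> one] \<open>u \<noteq> 1\<close> by auto
    moreover have "u ^ k \<noteq> - 1"
    proof
      assume "u ^ k = - 1"
      hence "(u ^ 2) ^ k = 1 ^ k"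
        by (simp add: power_commute_exponents[of u 2])
      hence "u ^ 2 = 1"
        using inj_onD[OF inj _ \<open>u ^ 2 \<in> roots_unity d\<close> one] by simp
      thus False
        using \<open>u \<noteq> 1\<close> \<open>u \<noteq> - 1\<close> by (simp add: power2_eq_1_iff)
    qed
    ultimately show ?thesis
      using power_maps_signed_roots[OF u e, of k] sign by (simp add: signed_roots_def)
  qed
  moreover have "finite (signed_roots n e :: 'a set)"
    by simp
  moreover have "inj_on (\<lambda>u. u ^ k) (signed_roots n e :: 'a set)"
    using inj sub inj_on_subset by blast
  ultimately show ?thesis
    by (simp add: bij_betw_def endo_inj_surj image_subset_iff)
qed

lemma not_inj_power_signed_roots:
  fixes n k :: nat and e :: int
  assumes n: "n dvd CARD('a::{field,finite}) - 1" "even n" and u: "u \<in> (signed_roots n e :: 'a set)"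
    and not_cop: "\<not> coprime k (n div 2)"
  shows "\<not> inj_on (\<lambda>u. u ^ k) (signed_roots n e :: 'a set)"
proof
  assume inj: "inj_on (\<lambda>u. u ^ k) (signed_roots n e :: 'a set)"
  have "n > 0"
    using n(1) card_field_ge_two[where 'a = 'a] by (auto intro!: gr0I)
  have "u ^ n = 1" "u \<noteq> 1" "u \<noteq> - 1"
    using u by (simp_all add: signed_roots_def roots_unity_def)
  hence u_ne: "u \<noteq> 0" "u \<noteq> 1" "u \<noteq> - 1"
    using \<open>n > 0\<close> by (metis zero_power zero_neq_one)+
  have "n div 2 dvd CARD('a) - 1"
    using n(1) by (rule dvd_trans[rotated]) (use n(2) in \<open>auto elim!: evenE\<close>)
  then obtain z :: 'a where z: "z ^ (n div 2) = 1" "z \<noteq> 1" "z ^ k = 1"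
    using nontrivial_root_of_not_coprime not_cop unfolding roots_unity_def by blast
  have "\<exists>j. u * z ^ j \<notin> {1, - 1} \<and> z ^ j \<noteq> 1"
  proof (cases "z = - 1 \<or> u * z \<notin> {1, - 1}")
    case True
    thus ?thesis
      using z(2) u_ne by (intro exI[of _ 1]) (auto simp: minus_equation_iff)
  next
    case False
    hence uz: "u * z \<in> {1, - 1}" and z_pm: "z \<notin> {1, - 1}"
      using z(2) by auto
    have "u * z ^ 2 = (u * z) * z"
      by (simp add: power2_eq_square mult.assoc)
    also have "\<dots> \<in> {z, - z}"
      using uz by auto
    finally have "u * z ^ 2 \<notin> {1, - 1}"
      using z_pm by (auto simp: minus_equation_iff)
    moreover have "z ^ 2 \<noteq> 1"
      using z_pm by (simp add: power2_eq_1_iff)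
    ultimately show ?thesis
      by blast
  qed
  then obtain j where j: "u * z ^ j \<notin> {1, - 1}" "z ^ j \<noteq> 1"
    by blast
  have zn: "(z ^ j) ^ (n div 2) = 1" "(z ^ j) ^ k = 1"
    using z by (simp_all add: power_commute_exponents[of z j])
  obtain m where m: "n = 2 * m"
    using n(2) by (rule evenE)
  have "(z ^ j) ^ n = ((z ^ j) ^ (n div 2)) ^ 2"
    by (simp only: m mult.commute[of 2] power_mult nonzero_mult_div_cancel_right)
  hence "u * z ^ j \<in> signed_roots n e"
    using u j zn by (simp add: signed_roots_def roots_unity_def power_mult_distrib)
  moreover have "(u * z ^ j) ^ k = u ^ k"
    using zn by (simp add: power_mult_distrib)
  ultimately have "u * z ^ j = u"
    using inj_onD[OF inj, of "u * z ^ j" u] u by simp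
  thus False
    using j(2) u_ne(1) by simp
qed

lemma coprime_of_bij_power_signed_roots:
  fixes n k :: nat and e :: int
  assumes two: "(2 :: 'a::{field,finite}) \<noteq> 0"
    and n: "n dvd CARD('a) - 1" "even n" and e: "e \<in> {1, - 1}"
    and ne: "signed_roots n e \<noteq> ({} :: 'a set)"
    and bij: "bij_betw (\<lambda>u. u ^ k) (signed_roots n e) (signed_roots n e :: 'a set)"
  shows "coprime k (if e = 1 then n div 2 else n)"
proof -
  obtain u :: 'a where u: "u \<in> signed_roots n e"
    using ne by blast
  have half: "coprime k (n div 2)"
    using not_inj_power_signed_roots[OF n u] bij by (auto simp: bij_betw_def)
  show ?thesis
  proof (cases "e = 1 \<or> odd k")
    case True
    thus ?thesis
      using half n(2) by (auto simp: coprime_mult_right_iff elim!: evenE)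
  next
    case False
    hence "e = - 1" "even k"
      using e by auto
    have "u ^ k \<in> signed_roots n e"
      using bij u by (auto simp: bij_betw_def)
    hence "(u ^ k) ^ (n div 2) = of_int e"
      by (simp add: signed_roots_def)
    moreover have "(u ^ k) ^ (n div 2) = 1"
      using power_maps_signed_roots(2)[OF u e, of k] \<open>e = - 1\<close> \<open>even k\<close> by simp
    ultimately show ?thesis
      using \<open>e = - 1\<close> minus_one_neq_one[OF two] by simp
  qed
qed

lemma bij_power_signed_roots_iff:
  fixes n k :: nat and e :: int
  assumes "(2 :: 'a::{field,finite}) \<noteq> 0" "n dvd CARD('a) - 1" "even n" "e \<in> {1, - 1}"
    and "signed_roots n e \<noteq> ({} :: 'a set)"
  shows "bij_betw (\<lambda>u. u ^ k) (signed_roots n e) (signed_roots n e :: 'a set) \<longleftrightarrow>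
    coprime k (if e = 1 then n div 2 else n)"
proof -
  have "n > 0"
    using assms(2) card_field_ge_two[where 'a = 'a] by (auto intro!: gr0I)
  thus ?thesis
    using assms bij_power_signed_roots coprime_of_bij_power_signed_roots by metis
qed

locale power_transport =
  fixes n k :: nat and \<phi> :: "'b::field \<Rightarrow> 'a" and f :: "'a \<Rightarrow> 'a" and T :: "'b set" and A :: "'a set"
  assumes n_pos: "n > 0" and T_sub: "T \<subseteq> roots_unity n" and pm_one_notin: "1 \<notin> T" "- 1 \<notin> T"
    and A_eq: "A = \<phi> ` T" and in_T: "\<And>u. u \<in> roots_unity n \<Longrightarrow> \<phi> u \<in> A \<Longrightarrow> u \<in> T"
    and \<phi>_eq_iff: "\<And>u v. u \<in> roots_unity n \<Longrightarrow> v \<in> roots_unity n \<Longrightarrow>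
      \<phi> u = \<phi> v \<longleftrightarrow> v = u \<or> v = inverse u"
    and f_\<phi>: "\<And>u. u \<in> roots_unity n \<Longrightarrow> f (\<phi> u) = \<phi> (u ^ k)"
begin

lemma roots_unity_closed:
  assumes "u \<in> roots_unity n"
  shows "u ^ j \<in> roots_unity n" "inverse u \<in> roots_unity n"
  using assms by (simp_all add: roots_unity_def power_commute_exponents[of u j] power_inverse)

lemma finite_T: "finite T"
  using T_sub power_roots_bound(1)[OF n_pos] by (auto simp: roots_unity_def intro: finite_subset)

lemma inverse_in_T: "u \<in> T \<Longrightarrow> inverse u \<in> T"
proof (rule in_T)
  assume "u \<in> T"
  hence u: "u \<in> roots_unity n"
    using T_sub by blast
  thus "inverse u \<in> roots_unity n"
    by (rule roots_unity_closed(2))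
  have "\<phi> (inverse u) = \<phi> u"
    using \<phi>_eq_iff[OF u roots_unity_closed(2)[OF u]] by simp
  thus "\<phi> (inverse u) \<in> A"
    using \<open>u \<in> T\<close> A_eq by simp
qed

lemma bij_power_of_bij:
  assumes bij: "bij_betw f A A"
  shows "bij_betw (\<lambda>u. u ^ k) T T"
proof -
  have maps: "u ^ k \<in> T" if "u \<in> T" for u
  proof (rule in_T)
    have u: "u \<in> roots_unity n"
      using that T_sub by blast
    thus "u ^ k \<in> roots_unity n"
      by (rule roots_unity_closed(1))
    have "f (\<phi> u) \<in> A"
      using bij that A_eq by (auto simp: bij_betw_def)
    thus "\<phi> (u ^ k) \<in> A"
      using f_\<phi>[OF u] by simp
  qed
  have "u = v" if uv: "u \<in> T" "v \<in> T" "u ^ k = v ^ k" for u v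
  proof -
    have roots: "u \<in> roots_unity n" "v \<in> roots_unity n"
      using uv T_sub by auto
    hence "f (\<phi> u) = f (\<phi> v)"
      using uv(3) f_\<phi> by simp
    hence "\<phi> u = \<phi> v"
      using bij uv A_eq unfolding bij_betw_def by (blast dest: inj_onD)
    hence "v = u \<or> v = inverse u"
      using \<phi>_eq_iff roots by blast
    moreover have "v \<noteq> inverse u"
    proof
      assume "v = inverse u"
      hence "u ^ k * u ^ k = u ^ k * inverse (u ^ k)"
        using uv(3) by (simp add: power_inverse)
      moreover have "u \<noteq> 0"
        using roots(1) n_pos by (auto simp: roots_unity_def power_0_left)
      ultimately have "(u ^ k) ^ 2 = 1"
        by (simp add: power2_eq_square)
      hence "u ^ k = 1 \<or> u ^ k = - 1"
        by (simp add: power2_eq_1_iff)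
      thus False
        using maps[OF uv(1)] pm_one_notin by auto
    qed
    ultimately show ?thesis
      by simp
  qed
  thus ?thesis
    using maps finite_T by (simp add: bij_betw_def endo_inj_surj image_subset_iff inj_on_def)
qed

lemma bij_of_bij_power:
  assumes bij: "bij_betw (\<lambda>u. u ^ k) T T"
  shows "bij_betw f A A"
proof -
  have f_\<phi>_T: "f (\<phi> u) = \<phi> (u ^ k)" "u ^ k \<in> T" if "u \<in> T" for u
    using that T_sub f_\<phi> bij by (auto simp: bij_betw_def)
  have "inj_on f A"
  proof (rule inj_onI)
    fix x y assume "x \<in> A" "y \<in> A" "f x = f y"
    then obtain u v where uv: "u \<in> T" "v \<in> T" "x = \<phi> u" "y = \<phi> v"
      using A_eq by auto
    hence "\<phi> (u ^ k) = \<phi> (v ^ k)"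
      using \<open>f x = f y\<close> f_\<phi>_T by simp
    moreover have "u ^ k \<in> roots_unity n" "v ^ k \<in> roots_unity n"
      using uv T_sub roots_unity_closed(1) by auto
    ultimately have "v ^ k = u ^ k \<or> v ^ k = inverse u ^ k"
      using \<phi>_eq_iff by (simp add: power_inverse)
    hence "v = u \<or> v = inverse u"
      using bij uv inverse_in_T unfolding bij_betw_def by (blast dest: inj_onD)
    thus "x = y"
      using uv \<phi>_eq_iff T_sub by blast
  qed
  moreover have "f ` A = A"
  proof
    show "f ` A \<subseteq> A"
      using A_eq f_\<phi>_T by auto
    show "A \<subseteq> f ` A"
    proof
      fix x assume "x \<in> A"
      then obtain w where "w \<in> T" "x = \<phi> w"
        using A_eq by auto
      moreover obtain u where "u \<in> T" "w = u ^ k"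
        using bij \<open>w \<in> T\<close> by (auto simp: bij_betw_def)
      ultimately have "x = f (\<phi> u)" "\<phi> u \<in> A"
        using A_eq f_\<phi>_T by simp_all
      thus "x \<in> f ` A"
        by blast
    qed
  qed
  ultimately show ?thesis
    by (simp add: bij_betw_def)
qed

lemma bij_betw_iff_bij_power: "bij_betw f A A \<longleftrightarrow> bij_betw (\<lambda>u. u ^ k) T T"
  using bij_power_of_bij bij_of_bij_power by blast

end

section \<open>The quadratic extension\<close>

(* The extension is 'a[t]/(t^2 - s t + p) for (s, p) = qext_modulus.  Over a finite field SOME
   picks a quadratic without roots (qext_modulus_no_root); over other rings the choice is
   arbitrary and qext need not be a field. *)
definition qext_modulus :: "'a::comm_ring_1 \<times> 'a" where
  "qext_modulus = (SOME (s, p). \<forall>r. r * r - s * r + p \<noteq> 0)"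

datatype 'a qext = QE (qre: 'a) (qim: 'a)

lemma qext_eq_iff: "x = y \<longleftrightarrow> qre x = qre y \<and> qim x = qim y"
  by (cases x; cases y) auto

instantiation qext :: (comm_ring_1) comm_ring_1
begin

definition "0 = QE 0 0"

definition "1 = QE 1 0"

definition "x + y = QE (qre x + qre y) (qim x + qim y)"

definition "x - y = QE (qre x - qre y) (qim x - qim y)"

definition "- x = QE (- qre x) (- qim x)"

definition "x * y = QE (qre x * qre y - snd qext_modulus * qim x * qim y)
  (qre x * qim y + qim x * qre y + fst qext_modulus * qim x * qim y)"

instance
  by standard (simp_all add: qext_eq_iff zero_qext_def one_qext_def plus_qext_def
      minus_qext_def uminus_qext_def times_qext_def algebra_simps)

end

lemma qext_simps [simp]:
  "qre 0 = 0" "qim 0 = 0" "qre 1 = 1" "qim 1 = 0"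
  "qre (x + y) = qre x + qre y" "qim (x + y) = qim x + qim y"
  "qre (x - y) = qre x - qre y" "qim (x - y) = qim x - qim y"
  "qre (- x) = - qre x" "qim (- x) = - qim x"
  "qre (x * y) = qre x * qre y - snd qext_modulus * qim x * qim y"
  "qim (x * y) = qre x * qim y + qim x * qre y + fst qext_modulus * qim x * qim y"
  for x y :: "'a::comm_ring_1 qext"
  by (simp_all add: zero_qext_def one_qext_def plus_qext_def minus_qext_def uminus_qext_def
      times_qext_def)

lemma qext_modulus_no_root:
  fixes r :: "'a::{field,finite}"
  shows "r * r - fst qext_modulus * r + snd qext_modulus \<noteq> 0"
proof -
  let ?g = "\<lambda>(r1, r2). (r1 + r2, r1 * r2 :: 'a)"
  have "?g (0, 1) = ?g (1, 0)"
    by simp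
  hence "\<not> inj ?g"
    by (meson injD prod.inject zero_neq_one)
  hence "\<not> surj ?g"
    using finite_UNIV_surj_inj[of ?g] by auto
  then obtain sp where sp: "sp \<notin> range ?g"
    by blast
  have "r * r - fst sp * r + snd sp \<noteq> 0" for r
  proof
    assume "r * r - fst sp * r + snd sp = 0"
    hence "r * (fst sp - r) = snd sp"
      by (simp add: algebra_simps eq_neg_iff_add_eq_0)
    hence "?g (r, fst sp - r) = sp"
      by simp
    thus False
      using sp by (metis rangeI)
  qed
  hence "\<exists>sp. \<forall>r :: 'a. r * r - fst sp * r + snd sp \<noteq> 0"
    by blast
  from someI_ex[OF this] show ?thesis
    unfolding qext_modulus_def by (simp add: case_prod_beta')
qed

definition qnorm :: "'a::comm_ring_1 qext \<Rightarrow> 'a" where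
  "qnorm x = qre x * qre x + fst qext_modulus * qre x * qim x + snd qext_modulus * qim x * qim x"

lemma qnorm_nonzero:
  fixes x :: "'a::{field,finite} qext"
  assumes "x \<noteq> 0"
  shows "qnorm x \<noteq> 0"
proof (cases "qim x = 0")
  case True
  with assms show ?thesis
    by (simp add: qnorm_def qext_eq_iff)
next
  case False
  define r where "r = - qre x / qim x"
  have "qnorm x = (qim x * qim x) * (r * r - fst qext_modulus * r + snd qext_modulus)"
    unfolding r_def qnorm_def using False by (simp add: field_simps)
  thus ?thesis
    using False qext_modulus_no_root[of r] by simp
qed

instantiation qext :: ("{field,finite}") field
begin

definition "inverse x = QE ((qre x + fst qext_modulus * qim x) / qnorm x) (- qim x / qnorm x)"

definition "x div y = x * inverse (y :: 'a qext)"

instance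
proof
  fix x :: "'a qext"
  assume "x \<noteq> 0"
  define a b s p where "a = qre x" "b = qim x" "s = fst (qext_modulus :: 'a \<times> 'a)"
    "p = snd (qext_modulus :: 'a \<times> 'a)"
  have N: "qnorm x = a * a + s * a * b + p * b * b" "qnorm x \<noteq> 0"
    using qnorm_nonzero[OF \<open>x \<noteq> 0\<close>] by (simp_all add: qnorm_def a_b_s_p_def)
  have "(a + s * b) / qnorm x * a - p * (- b / qnorm x) * b = (a * a + s * a * b + p * b * b) / qnorm x"
    using N(2) by (simp add: field_simps)
  also have "\<dots> = 1"
    using N by simp
  finally have "(a + s * b) / qnorm x * a - p * (- b / qnorm x) * b = 1" .
  moreover have "(a + s * b) / qnorm x * b + (- b / qnorm x) * a + s * (- b / qnorm x) * b = 0"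
    using N(2) by (simp add: field_simps)
  ultimately show "inverse x * x = 1"
    by (simp add: qext_eq_iff inverse_qext_def a_b_s_p_def)
qed (simp_all add: divide_qext_def qext_eq_iff inverse_qext_def)

end

lemma UNIV_qext: "UNIV = (\<lambda>(a, b). QE a b) ` UNIV"
  by (auto simp: image_iff) (metis qext.exhaust)

instance qext :: (finite) finite
  by standard (simp add: UNIV_qext)

lemma card_qext: "CARD('a::finite qext) = CARD('a) ^ 2"
proof -
  have "inj (\<lambda>(a, b). QE a b :: 'a qext)"
    by (auto simp: inj_on_def)
  hence "CARD('a qext) = CARD('a \<times> 'a)"
    by (simp add: UNIV_qext card_image)
  thus ?thesis
    by (simp add: power2_eq_square)
qed

definition of_base :: "'a::comm_ring_1 \<Rightarrow> 'a qext" where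
  "of_base a = QE a 0"

lemma of_base_hom [simp]:
  "of_base 0 = 0" "of_base 1 = 1"
  "of_base (a + b) = of_base a + of_base b" "of_base (a - b) = of_base a - of_base b"
  "of_base (- a) = - of_base a" "of_base (a * b) = of_base a * of_base b"
  by (simp_all add: of_base_def qext_eq_iff)

lemma of_base_eq_iff [simp]: "of_base a = of_base b \<longleftrightarrow> a = b"
  by (simp add: of_base_def)

lemma of_base_power [simp]: "of_base (a ^ n) = of_base a ^ n"
  by (induction n) simp_all

lemma of_base_of_nat [simp]: "of_base (of_nat n) = of_nat n"
  by (induction n) simp_all

lemma of_base_of_int [simp]: "of_base (of_int z) = of_int z"
  by (cases z rule: int_cases2) simp_all

lemma of_base_numeral [simp]: "of_base (numeral n) = numeral n"
  using of_base_of_nat[of "numeral n"] by simp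

lemma of_base_dickson: "of_base (dickson k x) = dickson k (of_base x)"
  by (induction k x rule: dickson.induct) simp_all

lemma QE_eq_of_base: "QE a b = of_base a + of_base b * QE 0 1"
  by (simp add: of_base_def qext_eq_iff)

definition frob :: "'a::{field,finite} qext \<Rightarrow> 'a qext" where
  "frob y = y ^ CARD('a)"

lemma frob_of_base [simp]: "frob (of_base a) = of_base a"
  by (simp add: frob_def power_card_eq_self flip: of_base_power)

lemma frob_mult: "frob (x * y) = frob x * frob y"
  by (simp add: frob_def power_mult_distrib)

lemma frob_inverse: "frob (inverse x) = inverse (frob x)"
  by (simp add: frob_def power_inverse)

(* (X + c)^q - X^q - c has degree < q but vanishes on the q elements of the base field. *)
lemma frob_add_of_base: "frob (y + of_base c) = frob y + of_base c"
proof -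
  let ?q = "CARD('a)"
  define P where "P = [:of_base c, 1:] ^ ?q - monom 1 ?q - [:of_base c:]"
  have eval: "poly P z = (z + of_base c) ^ ?q - z ^ ?q - of_base c" for z
    by (simp add: P_def poly_monom add.commute)
  have "P = 0"
  proof (rule ccontr)
    assume "P \<noteq> 0"
    have "degree P \<le> ?q"
      unfolding P_def
      by (intro degree_diff_le) (simp_all add: degree_monom_le degree_linear_power)
    moreover have "coeff [:of_base c:] ?q = 0"
      using card_field_ge_two[where 'a = 'a] by (cases ?q) simp_all
    hence "coeff P ?q = 0"
      by (simp add: P_def coeff_linear_power)
    ultimately have "degree P < ?q"
      using \<open>P \<noteq> 0\<close> eq_zero_or_degree_less by blast
    moreover have "poly P (of_base r) = 0" for r
      using frob_of_base[of "r + c"] frob_of_base[of r] by (simp add: eval frob_def)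
    hence "range of_base \<subseteq> {z. poly P z = 0}"
      by auto
    hence "card (range (of_base :: 'a \<Rightarrow> 'a qext)) \<le> degree P"
      using card_poly_roots_bound[OF \<open>P \<noteq> 0\<close>] poly_roots_finite[OF \<open>P \<noteq> 0\<close>]
      by (meson card_mono le_trans)
    moreover have "card (range (of_base :: 'a \<Rightarrow> 'a qext)) = ?q"
      by (simp add: card_image inj_on_def)
    ultimately show False
      by linarith
  qed
  hence "poly P y = 0"
    by simp
  thus ?thesis
    by (simp add: eval frob_def algebra_simps)
qed

lemma frob_add: "frob (x + y) = frob x + frob y"
proof -
  have frob_QE: "frob (QE a b) = of_base a + of_base b * frob (QE 0 1)" for a b :: 'a
  proof -
    have "frob (QE a b) = frob (of_base b * QE 0 1 + of_base a)"
      by (simp only: QE_eq_of_base[of a b] add.commute)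
    thus ?thesis
      by (simp add: frob_add_of_base frob_mult)
  qed
  obtain a b c d where "x = QE a b" "y = QE c d"
    by (meson qext.exhaust)
  moreover from this have "x + y = QE (a + c) (b + d)"
    by (simp add: qext_eq_iff)
  ultimately show ?thesis
    using frob_QE[of "a + c" "b + d"] frob_QE[of a b] frob_QE[of c d] by (simp add: algebra_simps)
qed

lemma frob_divide: "frob (x / y) = frob x / frob y"
  by (simp add: divide_inverse frob_mult frob_inverse)

lemma frob_fixed_iff: "frob y = y \<longleftrightarrow> y \<in> range of_base"
proof
  assume fixed: "frob y = y"
  let ?q = "CARD('a)"
  let ?R = "{z :: 'a qext. z ^ ?q = z}"
  let ?U = "{z :: 'a qext. z ^ (?q - 1) = 1}"
  have q: "?q - 1 > 0"
    using card_field_ge_two[where 'a = 'a] by simp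
  have "z ^ ?q = z ^ (?q - 1) * z" for z :: "'a qext"
    using q by (simp flip: power_Suc2)
  hence R: "?R \<subseteq> insert 0 ?U"
    by (auto simp del: power_Suc)
  have fin: "finite ?R"
    using power_roots_bound(1)[OF q] by (intro finite_subset[OF R]) simp
  have "card ?R \<le> card (insert 0 ?U)"
    using power_roots_bound(1)[OF q] by (intro card_mono R) simp
  also have "\<dots> \<le> Suc (card ?U)"
    by (rule card_insert_le_m1) simp_all
  also have "\<dots> \<le> ?q"
    using power_roots_bound(2)[OF q, of "1 :: 'a qext"] q by linarith
  finally have le: "card ?R \<le> ?q" .
  have sub: "range of_base \<subseteq> ?R"
    using frob_of_base by (auto simp: frob_def)
  have "card (range (of_base :: 'a \<Rightarrow> 'a qext)) = ?q"
    by (simp add: card_image inj_on_def)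
  moreover have "card (range (of_base :: 'a \<Rightarrow> 'a qext)) \<le> card ?R"
    using card_mono[OF fin sub] .
  ultimately have "range of_base = ?R"
    using le by (intro card_subset_eq[OF fin sub]) simp
  thus "y \<in> range of_base"
    using fixed by (simp add: frob_def)
next
  assume "y \<in> range of_base"
  thus "frob y = y"
    by auto
qed

section \<open>The split and the norm-one torus\<close>

(* \<rho> = 1: the split torus F_q^*; \<rho> = -1: the norm-one torus of F_{q^2}, cut out by u^(q+1) = 1. *)
definition torus_order :: "nat \<Rightarrow> int \<Rightarrow> nat" where
  "torus_order q \<rho> = (if \<rho> = 1 then q - 1 else q + 1)"

lemma torus_order_pos: "\<rho> \<in> {1, - 1} \<Longrightarrow> torus_order CARD('a::{field,finite}) \<rho> > 0"
  using card_field_ge_two[where 'a = 'a] by (auto simp: torus_order_def)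

lemma nonzero_torus:
  fixes u :: "'a::{field,finite} qext"
  assumes "\<rho> \<in> {1, - 1}" "u \<in> roots_unity (torus_order CARD('a) \<rho>)"
  shows "u \<noteq> 0"
  using assms torus_order_pos[OF assms(1), where 'a = 'a] by (auto simp: roots_unity_def power_0_left)

lemma frob_torus:
  fixes u :: "'a::{field,finite} qext"
  assumes "\<rho> \<in> {1, - 1}" "u \<in> roots_unity (torus_order CARD('a) \<rho>)"
  shows "frob u = (if \<rho> = 1 then u else inverse u)"
proof (cases "\<rho> = 1")
  case True
  hence "u ^ (CARD('a) - 1) = 1"
    using assms(2) by (simp add: roots_unity_def torus_order_def)
  thus ?thesis
    using True by (simp add: frob_def power_card_split[where 'a = 'a])
next
  case False
  hence "frob u * u = 1"
    using assms by (auto simp: roots_unity_def torus_order_def frob_def mult.commute)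
  thus ?thesis
    using False by (simp add: inverse_unique mult.commute)
qed

lemma roots_unity_of_frob:
  fixes u :: "'a::{field,finite} qext"
  assumes "u \<noteq> 0"
  shows "frob u = u \<Longrightarrow> u \<in> roots_unity (torus_order CARD('a) 1)"
    and "frob u = inverse u \<Longrightarrow> u \<in> roots_unity (torus_order CARD('a) (- 1))"
proof -
  note q = power_card_split[of u, where 'a = 'a]
  show "frob u = u \<Longrightarrow> u \<in> roots_unity (torus_order CARD('a) 1)"
    using assms q by (simp add: frob_def roots_unity_def torus_order_def)
  show "frob u = inverse u \<Longrightarrow> u \<in> roots_unity (torus_order CARD('a) (- 1))"
    using assms by (simp add: frob_def roots_unity_def torus_order_def)
qed

definition joukowsky :: "'a::{field,finite} qext \<Rightarrow> 'a" where
  "joukowsky u = qre (u + inverse u)"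

lemma of_base_joukowsky:
  fixes u :: "'a::{field,finite} qext"
  assumes "\<rho> \<in> {1, - 1}" "u \<in> roots_unity (torus_order CARD('a) \<rho>)"
  shows "of_base (joukowsky u) = u + inverse u"
proof -
  have "frob (u + inverse u) = u + inverse u"
    using frob_torus[OF assms] by (simp add: frob_add frob_inverse add.commute split: if_splits)
  then obtain a where "u + inverse u = of_base a"
    using frob_fixed_iff by blast
  thus ?thesis
    by (simp add: joukowsky_def of_base_def)
qed

lemma of_base_is_square:
  fixes \<delta> :: "'a::{field,finite}"
  assumes odd: "odd CARD('a)"
  shows "\<exists>\<tau>. \<tau> ^ 2 = of_base \<delta>"
proof (cases "\<delta> = 0")
  case False
  let ?q = "CARD('a)"
  obtain m where m: "?q = 2 * m + 1"
    using odd oddE by blast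
  have card: "2 * ((?q - 1) * (m + 1)) = CARD('a qext) - 1"
    by (simp add: card_qext m power2_eq_square algebra_simps)
  have "of_base \<delta> ^ ((?q - 1) * (m + 1)) = of_base ((\<delta> ^ (?q - 1)) ^ (m + 1))"
    by (simp only: power_mult of_base_power)
  also have "\<dots> = 1"
    using power_card_minus_one[OF False] by simp
  finally have "of_base \<delta> \<in> (\<lambda>y. y ^ 2) ` (UNIV - {0})"
    unfolding power_image_nonzero(1)[OF card] by (simp add: roots_unity_def)
  thus ?thesis
    by force
qed (auto intro: exI[of _ 0])

lemma two_neq_zero_qext:
  assumes "odd CARD('a::{field,finite})"
  shows "(2 :: 'a qext) \<noteq> 0"
  using two_neq_zero_odd_card[OF assms] of_base_eq_iff[of "2 :: 'a" 0] by simp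

(* With \<tau>^2 = x^2 - 4, Frobenius fixes or negates \<tau>, hence fixes or inverts u = (x + \<tau>)/2. *)
lemma joukowsky_cover:
  fixes x :: "'a::{field,finite}"
  assumes odd: "odd CARD('a)"
  shows "\<exists>u \<rho>. \<rho> \<in> {1, - 1} \<and> u \<in> roots_unity (torus_order CARD('a) \<rho>) \<and>
    of_base x = u + inverse u"
proof -
  obtain \<tau> :: "'a qext" where \<tau>: "\<tau> ^ 2 = of_base (x * x - 4)"
    using of_base_is_square[OF odd] by blast
  have "frob \<tau> ^ 2 = frob (\<tau> ^ 2)"
    by (simp add: power2_eq_square frob_mult)
  also have "\<dots> = \<tau> ^ 2"
    by (simp only: \<tau> frob_of_base)
  finally have "frob \<tau> ^ 2 = \<tau> ^ 2" .
  hence frob_\<tau>: "frob \<tau> = \<tau> \<or> frob \<tau> = - \<tau>"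
    by (simp add: power2_eq_iff)
  have two: "(2 :: 'a qext) \<noteq> 0"
    by (rule two_neq_zero_qext[OF odd])
  define u v where "u = (of_base x + \<tau>) / 2" "v = (of_base x - \<tau>) / 2"
  have "(4 :: 'a qext) = 2 * 2"
    by simp
  hence four: "(4 :: 'a qext) \<noteq> 0"
    using two by (simp only: mult_eq_0_iff) simp
  have "u * v = (of_base x * of_base x - \<tau> ^ 2) / 4"
    by (simp add: u_v_def field_simps power2_eq_square)
  also have "of_base x * of_base x - \<tau> ^ 2 = 4"
    by (simp add: \<tau>)
  finally have "u * v = 1"
    using four by simp
  hence "inverse u = v" "u \<noteq> 0"
    by (auto intro: inverse_unique)
  moreover have "u + v = (2 * of_base x) / 2"
    by (simp add: u_v_def add_divide_distrib[symmetric])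
  hence "u + v = of_base x"
    using two by simp
  moreover have "frob (2 :: 'a qext) = 2"
    using frob_of_base[of 2] by simp
  hence "frob u = (of_base x + frob \<tau>) / 2"
    by (simp only: u_v_def frob_divide frob_add frob_of_base)
  hence "frob u = u \<or> frob u = v"
    using frob_\<tau> by (auto simp: u_v_def)
  ultimately show ?thesis
    using roots_unity_of_frob by (metis insertCI)
qed

(* Euler's criterion for x + 2c = (u + c)^2 / u, using (u + c)^(q-1) = frob (u + c) / (u + c). *)
lemma of_int_qchar_shift:
  fixes x :: "'a::{field,finite}" and u :: "'a qext"
  assumes odd: "odd CARD('a)" and c: "c \<in> {1, - 1}"
    and u: "of_base x = u + inverse u" "u \<noteq> 0" "u + of_base c \<noteq> 0"
  shows "of_int (qchar (x + 2 * c)) =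
    (frob u + of_base c) / ((u + of_base c) * u ^ ((CARD('a) - 1) div 2))"
proof -
  let ?m = "(CARD('a) - 1) div 2"
  have m: "2 * ?m = CARD('a) - 1"
    using odd by simp
  have "of_base c * of_base c = 1"
    using c by auto
  hence "of_base (x + 2 * c) = (u + of_base c) ^ 2 / u"
    using u(1,2) by (simp add: field_simps power2_eq_square)
  hence "of_int (qchar (x + 2 * c)) = ((u + of_base c) ^ 2 / u) ^ ?m"
    by (metis of_base_of_int of_base_power of_int_qchar_eq_power[OF odd])
  also have "\<dots> = ((u + of_base c) ^ 2) ^ ?m / u ^ ?m"
    by (rule power_divide)
  also have "((u + of_base c) ^ 2) ^ ?m = (u + of_base c) ^ (CARD('a) - 1)"
    by (simp only: power_mult[symmetric] m)
  also have "(u + of_base c) ^ (CARD('a) - 1) = (frob u + of_base c) / (u + of_base c)"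
    using u(3) frob_add_of_base[of u c] power_card_split[of "u + of_base c", where 'a = 'a]
    by (simp add: eq_divide_eq frob_def)
  finally show ?thesis
    by simp
qed

lemma even_torus_order: "odd q \<Longrightarrow> even (torus_order q \<rho>)"
  by (simp add: torus_order_def)

lemma qchar_torus:
  fixes x :: "'a::{field,finite}" and u :: "'a qext"
  assumes odd: "odd CARD('a)" and \<rho>: "\<rho> \<in> {1, - 1}"
    and u: "u \<in> roots_unity (torus_order CARD('a) \<rho>)" "u \<notin> {1, - 1}"
    and x: "of_base x = u + inverse u"
  defines "h \<equiv> torus_order CARD('a) \<rho> div 2"
  shows "of_int (qchar (x + 2)) = u ^ h" and "of_int (qchar (x - 2)) = of_int \<rho> * u ^ h"
proof -
  let ?m = "(CARD('a) - 1) div 2"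
  have "u \<noteq> 0"
    using nonzero_torus[OF \<rho> u(1)] .
  have "u ^ h = 1 \<or> u ^ h = - 1"
    unfolding h_def by (rule power_half_roots_unity[OF u(1) even_torus_order[OF odd]])
  hence inv_h: "inverse (u ^ h) = u ^ h"
    by auto
  have h: "h = (if \<rho> = 1 then ?m else Suc ?m)"
    using odd \<rho> by (auto simp: h_def torus_order_def elim!: oddE)
  have val: "of_int (qchar (x + 2 * c)) = (if \<rho> = 1 then 1 else of_base c) * u ^ h"
    if c: "c \<in> {1, - 1}" for c
  proof -
    have cc: "of_base c * of_base c = 1"
      using c by auto
    have "u + of_base c \<noteq> 0"
      using u(2) c by (auto simp: add_eq_0_iff minus_equation_iff)
    hence "of_int (qchar (x + 2 * c)) = (frob u + of_base c) / ((u + of_base c) * u ^ ?m)"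
      using of_int_qchar_shift[OF odd c x \<open>u \<noteq> 0\<close>] by blast
    also have "\<dots> = (if \<rho> = 1 then 1 else of_base c) * inverse (u ^ h)"
    proof (cases "\<rho> = 1")
      case True
      thus ?thesis
        using frob_torus[OF \<rho> u(1)] \<open>u + of_base c \<noteq> 0\<close> h
        by (simp add: nonzero_divide_mult_cancel_left inverse_eq_divide)
    next
      case False
      have "inverse u + of_base c = of_base c * (u + of_base c) / u"
        using cc \<open>u \<noteq> 0\<close> by (simp add: field_simps)
      thus ?thesis
        using False frob_torus[OF \<rho> u(1)] \<open>u + of_base c \<noteq> 0\<close> \<open>u \<noteq> 0\<close> h
        by (simp add: inverse_eq_divide)
    qed
    finally show ?thesis
      by (simp add: inv_h)
  qed
  show "of_int (qchar (x + 2)) = u ^ h"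
    using val[of 1] by simp
  show "of_int (qchar (x - 2)) = of_int \<rho> * u ^ h"
    using val[of "- 1"] \<rho> by auto
qed

lemma of_int_qchar_eq_iff:
  assumes "odd CARD('a::{field,finite})" "e \<in> {- 1, 0, 1}"
  shows "(of_int (qchar (a :: 'a)) :: 'a qext) = of_int e \<longleftrightarrow> qchar a = e"
  using of_int_eq_iff_signs[OF two_neq_zero_qext[OF assms(1)] qchar_range assms(2)] .

lemma eq_pm_two_of_joukowsky:
  fixes u :: "'a::{field,finite} qext"
  assumes "of_base x = u + inverse u"
  shows "u = 1 \<Longrightarrow> x = 2" and "u = - 1 \<Longrightarrow> x = - 2"
proof -
  show "u = 1 \<Longrightarrow> x = 2"
    using assms of_base_eq_iff[of x 2] by simp
  show "u = - 1 \<Longrightarrow> x = - 2"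
    using assms of_base_eq_iff[of x "- 2"] by simp
qed

lemma torus_parameter:
  fixes x :: "'a::{field,finite}"
  assumes odd: "odd CARD('a)" and x: "qchar (x - 2) \<noteq> 0" "qchar (x + 2) \<noteq> 0"
  defines "\<rho> \<equiv> qchar (x - 2) * qchar (x + 2)"
  obtains u :: "'a qext" where "\<rho> \<in> {1, - 1}" "u \<in> roots_unity (torus_order CARD('a) \<rho>)"
    "u \<notin> {1, - 1}" "of_base x = u + inverse u"
    "u ^ (torus_order CARD('a) \<rho> div 2) = of_int (qchar (x + 2))"
proof -
  obtain u \<sigma> where \<sigma>: "\<sigma> \<in> {1, - 1}" and u: "u \<in> roots_unity (torus_order CARD('a) \<sigma>)"
    and ux: "of_base x = u + inverse u"
    using joukowsky_cover[OF odd] by blast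
  have "x \<noteq> 2" "x \<noteq> - 2"
    using x by (auto simp: qchar_def)
  hence "u \<notin> {1, - 1}"
    using eq_pm_two_of_joukowsky[OF ux] by auto
  note val = qchar_torus[OF odd \<sigma> u this ux]
  have "(of_int (qchar (x - 2)) :: 'a qext) = of_int (\<sigma> * qchar (x + 2))"
    using val by simp
  hence "qchar (x - 2) = \<sigma> * qchar (x + 2)"
    using \<sigma> qchar_range[of "x + 2"] by (subst (asm) of_int_qchar_eq_iff[OF odd]) auto
  hence "\<rho> = \<sigma>"
    using x(2) qchar_range[of "x + 2"] \<sigma> by (auto simp: \<rho>_def)
  thus ?thesis
    using that \<sigma> u \<open>u \<notin> {1, - 1}\<close> ux val(1) by simp
qed

lemma dickson_joukowsky:
  fixes u :: "'a::{field,finite} qext"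
  assumes "u \<noteq> 0" "of_base x = u + inverse u"
  shows "of_base (dickson k x) = u ^ k + inverse (u ^ k)"
  using assms dickson_add_inverse[of u "inverse u" k] by (simp add: of_base_dickson power_inverse)

lemma minus_one_power_torus:
  assumes "odd q" "\<rho> \<in> {1, - 1}"
  shows "(- 1 :: int) ^ (torus_order q \<rho> div 2) = \<rho> * (- 1) ^ ((q - 1) div 2)"
  using assms by (auto simp: torus_order_def elim!: oddE)

section \<open>Dickson maps on the sets Aset\<close>

lemma dickson_Aset:
  fixes x :: "'a::{field,finite}"
  assumes odd: "odd CARD('a)" and x: "x \<in> Aset 2 e1 e2" "e1 \<noteq> 0" "e2 \<noteq> 0"
  shows "dickson k x \<in> Aset 2 (e1 * e2 * e2 ^ k) (e2 ^ k) \<or> (dickson k x = 2 \<and> e2 ^ k = 1) \<or>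
    (dickson k x = - 2 \<and> e2 ^ k = e1 * e2 * (- 1) ^ ((CARD('a) - 1) div 2))"
proof -
  have q: "qchar (x - 2) = e1" "qchar (x + 2) = e2"
    using x(1) by (simp_all add: Aset_def)
  hence e: "e1 \<in> {1, - 1}" "e2 \<in> {1, - 1}"
    using x(2,3) qchar_range[of "x - 2"] qchar_range[of "x + 2"] by auto
  let ?\<rho> = "e1 * e2"
  let ?h = "torus_order CARD('a) ?\<rho> div 2"
  obtain u :: "'a qext" where \<rho>: "?\<rho> \<in> {1, - 1}"
    and u: "u \<in> roots_unity (torus_order CARD('a) ?\<rho>)" "u \<notin> {1, - 1}"
    and ux: "of_base x = u + inverse u" and uh: "u ^ ?h = of_int e2"
    using torus_parameter[OF odd] q x(2,3) by metis
  have "u \<noteq> 0"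
    using nonzero_torus[OF \<rho> u(1)] .
  have w: "u ^ k \<in> roots_unity (torus_order CARD('a) ?\<rho>)"
    using u(1) by (simp add: roots_unity_def power_commute_exponents[of u k])
  have wh: "(u ^ k) ^ ?h = of_int (e2 ^ k)"
    using uh by (simp add: power_commute_exponents[of u k])
  have D: "of_base (dickson k x) = u ^ k + inverse (u ^ k)"
    by (rule dickson_joukowsky[OF \<open>u \<noteq> 0\<close> ux])
  have sign: "(of_int i :: 'a qext) = of_int j \<longleftrightarrow> i = j" if "i \<in> {- 1, 1}" "j \<in> {- 1, 1}" for i j
    using of_int_eq_iff_signs[OF two_neq_zero_qext[OF odd]] that by auto
  have ek: "e2 ^ k \<in> {- 1, 1}"
    using e by (auto simp: minus_one_power_iff)
  consider "u ^ k = 1" | "u ^ k = - 1" | "u ^ k \<notin> {1, - 1}"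
    by blast
  thus ?thesis
  proof cases
    case 1
    hence "dickson k x = 2"
      using eq_pm_two_of_joukowsky(1)[OF D] by blast
    moreover have "e2 ^ k = 1"
      using 1 wh sign[OF ek, of 1] by simp
    ultimately show ?thesis
      by blast
  next
    case 2
    have D2: "dickson k x = - 2"
      using eq_pm_two_of_joukowsky(2)[OF D 2] .
    have "(of_int (e2 ^ k) :: 'a qext) = of_int (?\<rho> * (- 1) ^ ((CARD('a) - 1) div 2))"
      using wh 2 minus_one_power_torus[OF odd \<rho>] by (metis of_int_minus of_int_1 of_int_power)
    moreover have "?\<rho> * (- 1) ^ ((CARD('a) - 1) div 2) \<in> {- 1, 1}"
      using \<rho> by (auto simp: minus_one_power_iff)
    ultimately have "e2 ^ k = ?\<rho> * (- 1) ^ ((CARD('a) - 1) div 2)"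
      using sign[OF ek] by blast
    with D2 show ?thesis
      by blast
  next
    case 3
    note val = qchar_torus[OF odd \<rho> w 3 D]
    have "(of_int (qchar (dickson k x + 2)) :: 'a qext) = of_int (e2 ^ k)"
      using val(1) wh by simp
    hence "qchar (dickson k x + 2) = e2 ^ k"
      using of_int_qchar_eq_iff[OF odd, of "e2 ^ k"] ek by auto
    moreover have "(of_int (qchar (dickson k x - 2)) :: 'a qext) = of_int (?\<rho> * e2 ^ k)"
      using val(2) wh by simp
    hence "qchar (dickson k x - 2) = ?\<rho> * e2 ^ k"
      using of_int_qchar_eq_iff[OF odd, of "?\<rho> * e2 ^ k"] ek \<rho> by auto
    ultimately show ?thesis
      by (simp add: Aset_def)
  qed
qed

lemma dickson_image_Aset:
  fixes e1 e2 :: int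
  assumes "odd CARD('a::{field,finite})" "e1 \<noteq> 0" "e2 \<noteq> 0"
  shows "dickson k ` Aset (2 :: 'a) e1 e2 \<subseteq> Aset 2 (e1 * e2 * e2 ^ k) (e2 ^ k) \<union>
    {y. y = 2 \<and> e2 ^ k = 1 \<or> y = - 2 \<and> e2 ^ k = e1 * e2 * (- 1) ^ ((CARD('a) - 1) div 2)}"
  using dickson_Aset[OF assms(1) _ assms(2,3)] by blast

lemma dickson_range_of_dvd:
  fixes x :: "'a::{field,finite}"
  assumes odd: "odd CARD('a)" and \<rho>: "\<rho> \<in> {1, - 1}"
    and dvd: "torus_order CARD('a) \<rho> div 2 dvd k"
  shows "dickson k x \<in> {2, - 2} \<union> Aset 2 (- \<rho>) 1 \<union> Aset 2 (- \<rho> * (- 1) ^ k) ((- 1) ^ k)"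
proof (cases "qchar (x - 2) = 0 \<or> qchar (x + 2) = 0")
  case True
  hence "x = 2 \<or> x = - 2"
    by (auto simp: qchar_eq_zero_iff eq_neg_iff_add_eq_0)
  hence "dickson k x \<in> {2, - 2}"
    by (auto simp: dickson_two dickson_minus_two minus_one_power_iff)
  thus ?thesis
    by blast
next
  case False
  define e1 e2 where "e1 = qchar (x - 2)" "e2 = qchar (x + 2)"
  have e: "e1 \<in> {1, - 1}" "e2 \<in> {1, - 1}"
    using False qchar_range[of "x - 2"] qchar_range[of "x + 2"] by (auto simp: e1_e2_def)
  show ?thesis
  proof (cases "e1 * e2 = \<rho>")
    case True
    obtain u :: "'a qext" where u: "u \<in> roots_unity (torus_order CARD('a) \<rho>)"
      and ux: "of_base x = u + inverse u" and uh: "u ^ (torus_order CARD('a) \<rho> div 2) = of_int e2"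
      using torus_parameter[OF odd] False True by (metis e1_e2_def)
    obtain j where "k = torus_order CARD('a) \<rho> div 2 * j"
      using dvd by blast
    hence "u ^ k = of_int (e2 ^ j)"
      using uh by (simp add: power_mult)
    hence "u ^ k = 1 \<or> u ^ k = - 1"
      using e by (auto simp: minus_one_power_iff)
    hence "dickson k x \<in> {2, - 2}"
      using eq_pm_two_of_joukowsky[OF dickson_joukowsky[OF nonzero_torus[OF \<rho> u] ux]] by auto
    thus ?thesis
      by blast
  next
    case False
    have "x \<in> Aset 2 e1 e2"
      by (simp add: Aset_def e1_e2_def)
    moreover have "e1 * e2 = - \<rho>"
      using False e \<rho> by auto
    ultimately have "dickson k x \<in> Aset 2 (- \<rho> * e2 ^ k) (e2 ^ k) \<or> dickson k x \<in> {2, - 2}"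
      using dickson_Aset[OF odd, of x e1 e2 k] e by auto
    moreover have "Aset 2 (- \<rho> * e2 ^ k) (e2 ^ k) \<subseteq>
        Aset (2 :: 'a) (- \<rho>) 1 \<union> Aset 2 (- \<rho> * (- 1) ^ k) ((- 1) ^ k)"
      using e(2) by auto
    ultimately show ?thesis
      by blast
  qed
qed

lemma dickson_image_of_dvd:
  assumes "odd CARD('a::{field,finite})" "\<rho> \<in> {1, - 1}" "torus_order CARD('a) \<rho> div 2 dvd k"
  shows "dickson k ` (UNIV :: 'a set) \<subseteq>
    {2, - 2} \<union> Aset 2 (- \<rho>) 1 \<union> Aset 2 (- \<rho> * (- 1) ^ k) ((- 1) ^ k)"
  using dickson_range_of_dvd[OF assms] by blast

lemma torus_order_dvd_card_qext:
  assumes "\<rho> \<in> {1, - 1}"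
  shows "torus_order CARD('a::{field,finite}) \<rho> dvd CARD('a qext) - 1"
proof -
  obtain m where m: "CARD('a) = Suc m"
    using card_field_ge_two[where 'a = 'a] by (cases "CARD('a)") auto
  have eq: "CARD('a qext) - 1 = (CARD('a) - 1) * (CARD('a) + 1)"
    by (simp add: card_qext m power2_eq_square)
  show ?thesis
  proof (cases "\<rho> = 1")
    case True
    thus ?thesis
      unfolding torus_order_def eq by (simp only: if_P dvd_triv_left)
  next
    case False
    thus ?thesis
      unfolding torus_order_def eq by (simp only: if_False dvd_triv_right)
  qed
qed

lemma dval_eq_torus_order:
  assumes "e1 \<in> {1, - 1}" "e2 \<in> {1, - 1}"
  shows "dval q e1 e2 = (if e2 = 1 then torus_order q (e1 * e2) div 2 else torus_order q (e1 * e2))"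
  using assms by (auto simp: dval_def torus_order_def)

lemma joukowsky_eq_iff:
  fixes u v :: "'a::field"
  assumes "u \<noteq> 0" "v \<noteq> 0"
  shows "u + inverse u = v + inverse v \<longleftrightarrow> v = u \<or> v = inverse u"
proof
  assume "u + inverse u = v + inverse v"
  hence "(u - v) * (u * v - 1) = 0"
    using assms by (simp add: field_simps)
  hence "v = u \<or> u * v = 1"
    by auto
  thus "v = u \<or> v = inverse u"
    using inverse_unique by auto
qed auto

lemma dickson_joukowsky_torus:
  fixes u :: "'a::{field,finite} qext"
  assumes "\<rho> \<in> {1, - 1}" "u \<in> roots_unity (torus_order CARD('a) \<rho>)"
  shows "dickson k (joukowsky u) = joukowsky (u ^ k)"
proof -
  have uk: "u ^ k \<in> roots_unity (torus_order CARD('a) \<rho>)"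
    using assms(2) by (simp add: roots_unity_def power_commute_exponents[of u k])
  have "of_base (dickson k (joukowsky u)) = u ^ k + inverse (u ^ k)"
    by (rule dickson_joukowsky[OF nonzero_torus[OF assms] of_base_joukowsky[OF assms]])
  also have "\<dots> = of_base (joukowsky (u ^ k))"
    using of_base_joukowsky[OF assms(1) uk] by simp
  finally show ?thesis
    by (simp only: of_base_eq_iff)
qed

lemma joukowsky_in_Aset_iff:
  fixes e1 e2 :: int and u :: "'a::{field,finite} qext"
  assumes odd: "odd CARD('a)" and e: "e1 \<in> {1, - 1}" "e2 \<in> {1, - 1}"
    and u: "u \<in> roots_unity (torus_order CARD('a) (e1 * e2))"
  shows "joukowsky u \<in> Aset 2 e1 e2 \<longleftrightarrow> u \<in> signed_roots (torus_order CARD('a) (e1 * e2)) e2"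
proof -
  let ?h = "torus_order CARD('a) (e1 * e2) div 2"
  have \<rho>: "e1 * e2 \<in> {1, - 1}"
    using e by auto
  note base = of_base_joukowsky[OF \<rho> u]
  show ?thesis
  proof
    assume A: "joukowsky u \<in> Aset 2 e1 e2"
    have "joukowsky u \<noteq> 2" "joukowsky u \<noteq> - 2"
      using A e by (auto simp: Aset_def qchar_def)
    hence "u \<notin> {1, - 1}"
      using eq_pm_two_of_joukowsky[OF base] by auto
    moreover from this have "u ^ ?h = of_int (qchar (joukowsky u + 2))"
      using qchar_torus(1)[OF odd \<rho> u _ base] by simp
    ultimately show "u \<in> signed_roots (torus_order CARD('a) (e1 * e2)) e2"
      using A u by (simp add: signed_roots_def Aset_def)
  next
    assume "u \<in> signed_roots (torus_order CARD('a) (e1 * e2)) e2"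
    hence u': "u \<notin> {1, - 1}" "u ^ ?h = of_int e2"
      by (simp_all add: signed_roots_def)
    note val = qchar_torus[OF odd \<rho> u u'(1) base]
    have signs: "e1 \<in> {- 1, 0, 1}" "e2 \<in> {- 1, 0, 1}"
      using e by auto
    have "(of_int (qchar (joukowsky u - 2)) :: 'a qext) = of_int (e1 * e2 * e2)"
      using val(2) u'(2) by simp
    also have "e1 * e2 * e2 = e1"
      using e by auto
    finally have "qchar (joukowsky u - 2) = e1"
      using of_int_qchar_eq_iff[OF odd signs(1)] by blast
    moreover have "qchar (joukowsky u + 2) = e2"
      using of_int_qchar_eq_iff[OF odd signs(2)] val(1) u'(2) by simp
    ultimately show "joukowsky u \<in> Aset 2 e1 e2"
      by (simp add: Aset_def)
  qed
qed

lemma Aset_eq_image_joukowsky: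
  fixes e1 e2 :: int
  assumes odd: "odd CARD('a::{field,finite})" and e: "e1 \<in> {1, - 1}" "e2 \<in> {1, - 1}"
  shows "Aset (2 :: 'a) e1 e2 = joukowsky ` signed_roots (torus_order CARD('a) (e1 * e2)) e2"
proof
  show "Aset (2 :: 'a) e1 e2 \<subseteq> joukowsky ` signed_roots (torus_order CARD('a) (e1 * e2)) e2"
  proof
    fix x :: 'a assume x: "x \<in> Aset 2 e1 e2"
    hence q: "qchar (x - 2) = e1" "qchar (x + 2) = e2"
      by (simp_all add: Aset_def)
    hence "qchar (x - 2) \<noteq> 0" "qchar (x + 2) \<noteq> 0"
      using e by auto
    then obtain u :: "'a qext" where u: "u \<in> roots_unity (torus_order CARD('a) (e1 * e2))"
      and ux: "of_base x = u + inverse u"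
      using torus_parameter[OF odd] q by metis
    have "e1 * e2 \<in> {1, - 1}"
      using e by auto
    hence "of_base (joukowsky u) = of_base x"
      using of_base_joukowsky[OF _ u] ux by simp
    hence "joukowsky u = x"
      by (simp only: of_base_eq_iff)
    thus "x \<in> joukowsky ` signed_roots (torus_order CARD('a) (e1 * e2)) e2"
      using joukowsky_in_Aset_iff[OF odd e u] x by blast
  qed
  show "joukowsky ` signed_roots (torus_order CARD('a) (e1 * e2)) e2 \<subseteq> Aset (2 :: 'a) e1 e2"
    using joukowsky_in_Aset_iff[OF odd e] by (auto simp: signed_roots_def)
qed

lemma bij_dickson_Aset_iff:
  fixes e1 e2 :: int
  assumes odd: "odd CARD('a::{field,finite})" and e: "e1 \<in> {1, - 1}" "e2 \<in> {1, - 1}"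
    and ne: "Aset (2 :: 'a) e1 e2 \<noteq> {}"
  defines "n \<equiv> torus_order CARD('a) (e1 * e2)"
  shows "bij_betw (dickson k) (Aset (2 :: 'a) e1 e2) (Aset 2 e1 e2) \<longleftrightarrow>
    coprime k (if e2 = 1 then n div 2 else n)"
proof -
  let ?T = "signed_roots n e2 :: 'a qext set"
  have \<rho>: "e1 * e2 \<in> {1, - 1}"
    using e by auto
  interpret power_transport n k joukowsky "dickson k" ?T "Aset (2 :: 'a) e1 e2"
  proof
    show "n > 0"
      using torus_order_pos[OF \<rho>] by (simp add: n_def)
    show "?T \<subseteq> roots_unity n" "1 \<notin> ?T" "- 1 \<notin> ?T"
      by (auto simp: signed_roots_def)
    show "Aset 2 e1 e2 = joukowsky ` ?T"
      using Aset_eq_image_joukowsky[OF odd e] by (simp add: n_def)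
    show "u \<in> ?T" if "u \<in> roots_unity n" "joukowsky u \<in> Aset 2 e1 e2" for u :: "'a qext"
      using joukowsky_in_Aset_iff[OF odd e] that by (simp add: n_def)
    show "joukowsky u = joukowsky v \<longleftrightarrow> v = u \<or> v = inverse u"
      if "u \<in> roots_unity n" "v \<in> roots_unity n" for u v :: "'a qext"
    proof -
      have "joukowsky u = joukowsky v \<longleftrightarrow> of_base (joukowsky u) = of_base (joukowsky v)"
        by (simp only: of_base_eq_iff)
      also have "\<dots> \<longleftrightarrow> u + inverse u = v + inverse v"
        using of_base_joukowsky[OF \<rho>, where 'a = 'a] that by (simp add: n_def)
      also have "\<dots> \<longleftrightarrow> v = u \<or> v = inverse u"
        using joukowsky_eq_iff nonzero_torus[OF \<rho> that(1)[unfolded n_def]]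
          nonzero_torus[OF \<rho> that(2)[unfolded n_def]] by blast
      finally show ?thesis .
    qed
    show "dickson k (joukowsky u) = joukowsky (u ^ k)" if "u \<in> roots_unity n" for u :: "'a qext"
      using dickson_joukowsky_torus[OF \<rho>] that by (simp add: n_def)
  qed
  have "bij_betw (\<lambda>u. u ^ k) ?T ?T \<longleftrightarrow> coprime k (if e2 = 1 then n div 2 else n)"
  proof (rule bij_power_signed_roots_iff)
    show "(2 :: 'a qext) \<noteq> 0"
      by (rule two_neq_zero_qext[OF odd])
    show "n dvd CARD('a qext) - 1"
      using torus_order_dvd_card_qext[OF \<rho>] by (simp add: n_def)
    show "even n"
      using odd by (simp add: n_def even_torus_order)
    show "e2 \<in> {1, - 1}"
      by (rule e(2))
    show "?T \<noteq> {}"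
      using ne A_eq by blast
  qed
  thus ?thesis
    using bij_betw_iff_bij_power by simp
qed

theorem theorem1p1:
  fixes k q :: nat and \<epsilon> :: int
  assumes q_def: "q = card (UNIV::'a::{field,finite} set)"
    and q_odd: "odd q"
    and eps_def: "\<epsilon> = (-1::int) ^ ((q - 1) div 2)"
    and k_pos: "k \<ge> 1"
  shows
   "dickson k (2::'a) = 2 \<and> dickson k (-2::'a) = (-1) ^ k * 2
    \<and> (dickson k ` Aset (2::'a) 1 1 \<subseteq> Aset 2 1 1 \<union> {2, - 2 * of_int \<epsilon>}
       \<and> dickson k ` Aset (2::'a) (-1) 1 \<subseteq> Aset 2 (-1) 1 \<union> {2, 2 * of_int \<epsilon>})
    \<and> (odd k \<longrightarrow>
         dickson k ` Aset (2::'a) \<epsilon> (-1) \<subseteq> Aset 2 \<epsilon> (-1) \<union> {-2}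
       \<and> dickson k ` Aset (2::'a) (-\<epsilon>) (-1) \<subseteq> Aset 2 (-\<epsilon>) (-1))
    \<and> (even k \<longrightarrow>
         dickson k ` Aset (2::'a) (-1) (-1) \<subseteq> Aset 2 1 1 \<union> {2, - 2 * of_int \<epsilon>}
       \<and> dickson k ` Aset (2::'a) 1 (-1) \<subseteq> Aset 2 (-1) 1 \<union> {2, 2 * of_int \<epsilon>})
    \<and> ((q - 1) div 2 dvd k \<longrightarrow>
         dickson k ` (UNIV::'a set) \<subseteq> Aset 2 1 (-1) \<union> Aset 2 (-1) 1 \<union> {2, -2}
       \<and> (even k \<longrightarrow> dickson k ` (UNIV::'a set) \<subseteq> Aset 2 (-1) 1 \<union> {2, -2}))
    \<and> ((q + 1) div 2 dvd k \<longrightarrow>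
         dickson k ` (UNIV::'a set) \<subseteq> Aset 2 1 1 \<union> Aset 2 (-1) (-1) \<union> {2, -2}
       \<and> (even k \<longrightarrow> dickson k ` (UNIV::'a set) \<subseteq> Aset 2 1 1 \<union> {2, -2}))
    \<and> (\<forall>e1\<in>{1, -1}. \<forall>e2\<in>{1, -1}. Aset (2::'a) e1 e2 \<noteq> {} \<longrightarrow>
         (bij_betw (dickson k) (Aset (2::'a) e1 e2) (Aset 2 e1 e2)
          \<longleftrightarrow> gcd k (dval q e1 e2) = 1))"
proof -
  have odd: "odd CARD('a)"
    using q_odd q_def by simp
  have \<epsilon>: "\<epsilon> = 1 \<or> \<epsilon> = - 1" "(- 1) ^ ((CARD('a) - 1) div 2) = \<epsilon>"
    using eps_def q_def by (auto simp: minus_one_power_iff)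
  note image = dickson_image_Aset[OF odd, where k = k, unfolded \<epsilon>(2)]
  have i: "dickson k ` Aset (2::'a) 1 1 \<subseteq> Aset 2 1 1 \<union> {2, - 2 * of_int \<epsilon>}
      \<and> dickson k ` Aset (2::'a) (-1) 1 \<subseteq> Aset 2 (-1) 1 \<union> {2, 2 * of_int \<epsilon>}"
    using image[of 1 1] image[of "- 1" 1] \<epsilon>(1) by auto
  have ii: "odd k \<longrightarrow> dickson k ` Aset (2::'a) \<epsilon> (-1) \<subseteq> Aset 2 \<epsilon> (-1) \<union> {-2}
      \<and> dickson k ` Aset (2::'a) (-\<epsilon>) (-1) \<subseteq> Aset 2 (-\<epsilon>) (-1)"
    using image[of \<epsilon> "- 1"] image[of "- \<epsilon>" "- 1"] \<epsilon>(1) by (auto simp: image_subset_iff)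
  have iii: "even k \<longrightarrow> dickson k ` Aset (2::'a) (-1) (-1) \<subseteq> Aset 2 1 1 \<union> {2, - 2 * of_int \<epsilon>}
      \<and> dickson k ` Aset (2::'a) 1 (-1) \<subseteq> Aset 2 (-1) 1 \<union> {2, 2 * of_int \<epsilon>}"
    using image[of "- 1" "- 1"] image[of 1 "- 1"] \<epsilon>(1) by auto
  have iv: "(q - 1) div 2 dvd k \<longrightarrow>
      dickson k ` (UNIV::'a set) \<subseteq> Aset 2 1 (-1) \<union> Aset 2 (-1) 1 \<union> {2, -2}
      \<and> (even k \<longrightarrow> dickson k ` (UNIV::'a set) \<subseteq> Aset 2 (-1) 1 \<union> {2, -2})"
    using dickson_image_of_dvd[OF odd, of 1 k] q_def by (cases "even k") (auto simp: torus_order_def)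
  have v: "(q + 1) div 2 dvd k \<longrightarrow>
      dickson k ` (UNIV::'a set) \<subseteq> Aset 2 1 1 \<union> Aset 2 (-1) (-1) \<union> {2, -2}
      \<and> (even k \<longrightarrow> dickson k ` (UNIV::'a set) \<subseteq> Aset 2 1 1 \<union> {2, -2})"
    using dickson_image_of_dvd[OF odd, of "- 1" k] q_def by (cases "even k") (auto simp: torus_order_def)
  have vi: "bij_betw (dickson k) (Aset (2::'a) e1 e2) (Aset 2 e1 e2) \<longleftrightarrow> gcd k (dval q e1 e2) = 1"
    if "e1 \<in> {1, - 1}" "e2 \<in> {1, - 1}" "Aset (2::'a) e1 e2 \<noteq> {}" for e1 e2
    using bij_dickson_Aset_iff[OF odd that, of k] dval_eq_torus_order[OF that(1,2)] q_def
    by (simp add: coprime_iff_gcd_eq_1)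
  show ?thesis
    using i ii iii iv v vi by (intro conjI ballI impI dickson_two dickson_minus_two) simp_all
qed

end
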